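(* Let $A, B \in \mathbb{R}^{n\times n}_+$ be entrywise nonnegative Schur-stable matrices. Let $\mathcal{D}_{A,B}$ denote the set of diagonal matrices $D\in\mathbb{R}^{n\times n}$ with nonnegative diagonal entries such that $A-D$ and $B-D$ are both entrywise nonnegative. For $D\in\mathcal{D}_{A,B}$ let $$M=\begin{pmatrix} A-D & D\\ D & B-D\end{pmatrix}\in\mathbb{R}^{2n\times 2n}.$$ Consider the statements: (i) there exists a diagonal matrix $E\succ 0$ with $A^TEA-E\prec 0$ and $B^TEB-E\prec 0$; (ii) there exists a diagonal matrix $E\succ 0$ with $(A-I)^TE+E(A-I)\prec 0$ and $(B-I)^TE+E(B-I)\prec 0$; (iii) for every $D\in\mathcal{D}_{A,B}$, the matrix $M$ is Schur-stable. Then (i) $\Rightarrow$ (ii) $\Rightarrow$ (iii).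
   Context: A real square matrix is Schur-stable if its spectral radius is strictly less than $1$. For a symmetric matrix $P$, $P\succ 0$ ($P\prec 0$) means $P$ is positive (negative) definite. $\mathbb{R}^{n\times n}_+$ denotes the set of entrywise nonnegative $n\times n$ real matrices. *)

theory Defs
  imports "Jordan_Normal_Form.Spectral_Radius"
begin

definition schur_stable :: "real mat \<Rightarrow> bool" where
  "schur_stable A \<longleftrightarrow> square_mat A \<and> spectral_radius (map_mat complex_of_real A) < 1"

definition nonneg_mat :: "real mat \<Rightarrow> bool" where
  "nonneg_mat A \<longleftrightarrow> (\<forall>i < dim_row A. \<forall>j < dim_col A. A $$ (i,j) \<ge> 0)"

definition pos_def_mat :: "real mat \<Rightarrow> bool" where
  "pos_def_mat P \<longleftrightarrow> square_mat P \<and> P\<^sup>T = P \<and>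
     (\<forall>x \<in> carrier_vec (dim_row P). x \<noteq> 0\<^sub>v (dim_row P) \<longrightarrow> x \<bullet> (P *\<^sub>v x) > 0)"

definition neg_def_mat :: "real mat \<Rightarrow> bool" where
  "neg_def_mat P \<longleftrightarrow> square_mat P \<and> P\<^sup>T = P \<and>
     (\<forall>x \<in> carrier_vec (dim_row P). x \<noteq> 0\<^sub>v (dim_row P) \<longrightarrow> x \<bullet> (P *\<^sub>v x) < 0)"

definition DAB :: "nat \<Rightarrow> real mat \<Rightarrow> real mat \<Rightarrow> real mat set" where
  "DAB n A B = {D. D \<in> carrier_mat n n \<and> diagonal_mat D \<and> (\<forall>i<n. D $$ (i,i) \<ge> 0)
                   \<and> nonneg_mat (A - D) \<and> nonneg_mat (B - D)}"

end

theory Submission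
  imports Defs
begin

(*
  (i) => (ii): with y = A x, expanding (x - y)^T E (x - y) >= 0 gives
  2 x^T E y <= x^T E x + y^T E y, so x^T ((A - I)^T E + E (A - I)) x = 2 x^T E y - 2 x^T E x
  is at most y^T E y - x^T E x = x^T (A^T E A - E) x < 0.

  (ii) => (iii): for the diagonal weights e of E, (ii) says that
  sum_i e_i u_i (A u)_i < sum_i e_i u_i^2 for u <> 0, and likewise for B. Giving both halves
  of x = (u, v) the weights e, the coupling through D only subtracts
  sum_i e_i D_ii (u_i - v_i)^2 >= 0, so M inherits the strict inequality. For a nonnegative
  matrix such an inequality bounds the spectral radius: if M z = lambda z and w = |z|, then
  |lambda| w <= M w entrywise, and testing the inequality at w yields |lambda| < 1.

  Only for n = 0 is the stability of A used.
*)

definition weighted_scalar_prod :: "(nat \<Rightarrow> real) \<Rightarrow> real vec \<Rightarrow> real vec \<Rightarrow> real" where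
  "weighted_scalar_prod f x y = (\<Sum>i<dim_vec x. f i * x $ i * y $ i)"

lemma weighted_scalar_prod_cong:
  assumes "dim_vec x = n" and "\<And>i. i < n \<Longrightarrow> f i = g i"
  shows "weighted_scalar_prod f x y = weighted_scalar_prod g x y"
  using assms unfolding weighted_scalar_prod_def by (intro sum.cong) auto

lemma weighted_scalar_prod_append:
  assumes "u \<in> carrier_vec n" "u' \<in> carrier_vec n" "v \<in> carrier_vec m" "v' \<in> carrier_vec m"
  shows "weighted_scalar_prod f (u @\<^sub>v v) (u' @\<^sub>v v') =
    weighted_scalar_prod f u u' + weighted_scalar_prod (\<lambda>i. f (n + i)) v v'"
proof -
  have split: "(\<Sum>i<n + k. g i) = (\<Sum>i<n. g i) + (\<Sum>i<k. g (n + i))" for g :: "nat \<Rightarrow> real" and k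
    by (induction k) auto
  show ?thesis
    using assms unfolding weighted_scalar_prod_def by (simp add: split)
qed

lemma weighted_scalar_prod_append_periodic:
  assumes "u \<in> carrier_vec n" "u' \<in> carrier_vec n" "v \<in> carrier_vec n" "v' \<in> carrier_vec n"
  shows "weighted_scalar_prod (\<lambda>i. e (i mod n)) (u @\<^sub>v v) (u' @\<^sub>v v') =
    weighted_scalar_prod e u u' + weighted_scalar_prod e v v'"
proof -
  have "weighted_scalar_prod (\<lambda>i. e (i mod n)) w w' = weighted_scalar_prod e w w'"
    if "w \<in> carrier_vec n" for w w'
    using that by (intro weighted_scalar_prod_cong) auto
  then show ?thesis
    using weighted_scalar_prod_append[OF assms, of "\<lambda>i. e (i mod n)"] assms by simp
qed

lemma diagonal_mat_mult_vec_index: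
  fixes D :: "'a :: semiring_0 mat"
  assumes D: "D \<in> carrier_mat n n" and "diagonal_mat D" and u: "u \<in> carrier_vec n" and i: "i < n"
  shows "(D *\<^sub>v u) $ i = D $$ (i, i) * u $ i"
proof -
  have "(D *\<^sub>v u) $ i = (\<Sum>j\<in>{0..<n}. D $$ (i, j) * u $ j)"
    using D u i by (simp add: mult_mat_vec_def scalar_prod_def)
  also have "\<dots> = (\<Sum>j\<in>{0..<n}. if j = i then D $$ (i, i) * u $ i else 0)"
    using assms by (intro sum.cong) (auto simp: diagonal_mat_def)
  finally show ?thesis
    using i by simp
qed

lemma scalar_prod_diagonal_mult_vec:
  fixes E :: "real mat"
  assumes E: "E \<in> carrier_mat n n" and "diagonal_mat E" and x: "x \<in> carrier_vec n" and y: "y \<in> carrier_vec n"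
  shows "x \<bullet> (E *\<^sub>v y) = weighted_scalar_prod (\<lambda>i. E $$ (i, i)) x y"
  using assms diagonal_mat_mult_vec_index[OF E _ y]
  unfolding weighted_scalar_prod_def scalar_prod_def
  by (auto simp: atLeast0LessThan ac_simps intro: sum.cong)

lemma pos_def_mat_diagonal_entry_pos:
  fixes E :: "real mat"
  assumes E: "E \<in> carrier_mat n n" and pd: "pos_def_mat E" and i: "i < n"
  shows "E $$ (i, i) > 0"
proof -
  have "unit_vec n i \<in> carrier_vec n" "unit_vec n i \<noteq> 0\<^sub>v n"
    using i by auto
  with pd E have "0 < unit_vec n i \<bullet> (E *\<^sub>v unit_vec n i)"
    unfolding pos_def_mat_def by auto
  also have "\<dots> = E $$ (i, i)"
    using E i by simp
  finally show ?thesis .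
qed

lemma pos_def_mat_quadratic_form_nonneg:
  assumes "pos_def_mat E" and "E \<in> carrier_mat n n" and "x \<in> carrier_vec n"
  shows "0 \<le> x \<bullet> (E *\<^sub>v x)"
  using assms unfolding pos_def_mat_def by (cases "x = 0\<^sub>v n") (auto intro: less_imp_le)

lemma symmetric_mat_scalar_prod_swap:
  fixes E :: "'a :: comm_semiring_0 mat"
  assumes E: "E \<in> carrier_mat n n" and "E\<^sup>T = E" and x: "x \<in> carrier_vec n" and y: "y \<in> carrier_vec n"
  shows "x \<bullet> (E *\<^sub>v y) = y \<bullet> (E *\<^sub>v x)"
  using transpose_vec_mult_scalar[OF E y x] assms comm_scalar_prod[of "E *\<^sub>v x" n y] by simp

lemma transpose_lyapunov_sum:
  fixes E P :: "'a :: comm_semiring_0 mat"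
  assumes E: "E \<in> carrier_mat n n" and "E\<^sup>T = E" and P: "P \<in> carrier_mat n n"
  shows "(P\<^sup>T * E + E * P)\<^sup>T = P\<^sup>T * E + E * P"
  using assms by (simp add: transpose_add[of _ n n] transpose_mult comm_add_mat[of _ n n])

lemma quadratic_form_lyapunov_sum:
  fixes E P :: "'a :: comm_semiring_1 mat"
  assumes E: "E \<in> carrier_mat n n" and sym: "E\<^sup>T = E" and P: "P \<in> carrier_mat n n"
    and x: "x \<in> carrier_vec n"
  shows "x \<bullet> ((P\<^sup>T * E + E * P) *\<^sub>v x) = 2 * (x \<bullet> (E *\<^sub>v (P *\<^sub>v x)))"
proof -
  have "x \<bullet> ((P\<^sup>T * E + E * P) *\<^sub>v x) = x \<bullet> (P\<^sup>T *\<^sub>v (E *\<^sub>v x)) + x \<bullet> (E *\<^sub>v (P *\<^sub>v x))"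
    using assms by (simp add: add_mult_distrib_mat_vec[of _ n n] scalar_prod_add_distrib[of _ n])
  also have "x \<bullet> (P\<^sup>T *\<^sub>v (E *\<^sub>v x)) = (P *\<^sub>v x) \<bullet> (E *\<^sub>v x)"
    using assms transpose_vec_mult_scalar[OF P x, of "E *\<^sub>v x"]
    by (simp add: comm_scalar_prod[of "P *\<^sub>v x" n] comm_scalar_prod[of x n])
  also have "\<dots> = x \<bullet> (E *\<^sub>v (P *\<^sub>v x))"
    using symmetric_mat_scalar_prod_swap[OF E sym, of "P *\<^sub>v x" x] assms by simp
  finally show ?thesis
    by (simp add: mult_2)
qed

lemma quadratic_form_congruence_minus:
  fixes E A :: "'a :: comm_ring mat"
  assumes E: "E \<in> carrier_mat n n" and A: "A \<in> carrier_mat n n" and x: "x \<in> carrier_vec n"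
  shows "x \<bullet> ((A\<^sup>T * E * A - E) *\<^sub>v x) = (A *\<^sub>v x) \<bullet> (E *\<^sub>v (A *\<^sub>v x)) - x \<bullet> (E *\<^sub>v x)"
proof -
  have "x \<bullet> ((A\<^sup>T * E * A - E) *\<^sub>v x) = x \<bullet> (A\<^sup>T *\<^sub>v (E *\<^sub>v (A *\<^sub>v x))) - x \<bullet> (E *\<^sub>v x)"
    using assms
    by (simp add: minus_mult_distrib_mat_vec[of _ n n] scalar_prod_minus_distrib[of _ n]
        assoc_mult_mat_vec[of "A\<^sup>T" n n "E * A" n])
  also have "x \<bullet> (A\<^sup>T *\<^sub>v (E *\<^sub>v (A *\<^sub>v x))) = (A *\<^sub>v x) \<bullet> (E *\<^sub>v (A *\<^sub>v x))"
    using assms transpose_vec_mult_scalar[OF A x, of "E *\<^sub>v (A *\<^sub>v x)"]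
    by (simp add: comm_scalar_prod[of x n] comm_scalar_prod[of "A *\<^sub>v x" n])
  finally show ?thesis .
qed

lemma neg_def_lyapunov_continuous_if_discrete:
  fixes A E :: "real mat"
  assumes A: "A \<in> carrier_mat n n" and E: "E \<in> carrier_mat n n" and pd: "pos_def_mat E"
    and discrete: "neg_def_mat (A\<^sup>T * E * A - E)"
  shows "neg_def_mat ((A - 1\<^sub>m n)\<^sup>T * E + E * (A - 1\<^sub>m n))"
proof -
  have sym: "E\<^sup>T = E"
    using pd unfolding pos_def_mat_def by simp
  have P: "A - 1\<^sub>m n \<in> carrier_mat n n"
    using A by (simp add: minus_carrier_mat)
  have "x \<bullet> (((A - 1\<^sub>m n)\<^sup>T * E + E * (A - 1\<^sub>m n)) *\<^sub>v x) < 0"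
    if x: "x \<in> carrier_vec n" "x \<noteq> 0\<^sub>v n" for x
  proof -
    define y where "y = A *\<^sub>v x"
    have y: "y \<in> carrier_vec n"
      using A x by (simp add: y_def)
    have decrease: "y \<bullet> (E *\<^sub>v y) - x \<bullet> (E *\<^sub>v x) < 0"
      using discrete x E A quadratic_form_congruence_minus[OF E A x(1)]
      unfolding neg_def_mat_def y_def by auto
    have "0 \<le> (x - y) \<bullet> (E *\<^sub>v (x - y))"
      using pos_def_mat_quadratic_form_nonneg[OF pd E, of "x - y"] x y by simp
    also have "\<dots> = x \<bullet> (E *\<^sub>v x) - 2 * (x \<bullet> (E *\<^sub>v y)) + y \<bullet> (E *\<^sub>v y)"
      using E x y symmetric_mat_scalar_prod_swap[OF E sym x(1) y]
      by (simp add: mult_minus_distrib_mat_vec scalar_prod_minus_distrib[of _ n]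
          minus_scalar_prod_distrib[of _ n])
    finally have cross: "2 * (x \<bullet> (E *\<^sub>v y)) \<le> x \<bullet> (E *\<^sub>v x) + y \<bullet> (E *\<^sub>v y)"
      by simp
    have "x \<bullet> (((A - 1\<^sub>m n)\<^sup>T * E + E * (A - 1\<^sub>m n)) *\<^sub>v x) = 2 * (x \<bullet> (E *\<^sub>v y)) - 2 * (x \<bullet> (E *\<^sub>v x))"
      using quadratic_form_lyapunov_sum[OF E sym P x(1)] A E x y
      by (simp add: y_def minus_mult_distrib_mat_vec[of _ n n] mult_minus_distrib_mat_vec
          scalar_prod_minus_distrib[of _ n])
    with cross decrease show ?thesis
      by linarith
  qed
  then show ?thesis
    using P E transpose_lyapunov_sum[OF E sym P] unfolding neg_def_mat_def by auto
qed

lemma weighted_contraction_if_neg_def_lyapunov: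
  fixes A E :: "real mat"
  assumes A: "A \<in> carrier_mat n n" and E: "E \<in> carrier_mat n n" and dg: "diagonal_mat E"
    and lyap: "neg_def_mat ((A - 1\<^sub>m n)\<^sup>T * E + E * (A - 1\<^sub>m n))" and u: "u \<in> carrier_vec n"
  shows "weighted_scalar_prod (\<lambda>i. E $$ (i, i)) u (A *\<^sub>v u) \<le> weighted_scalar_prod (\<lambda>i. E $$ (i, i)) u u"
    and "u \<noteq> 0\<^sub>v n \<Longrightarrow>
      weighted_scalar_prod (\<lambda>i. E $$ (i, i)) u (A *\<^sub>v u) < weighted_scalar_prod (\<lambda>i. E $$ (i, i)) u u"
proof -
  have sym: "E\<^sup>T = E"
    using E dg by (intro eq_matI) (auto simp: diagonal_mat_def, metis)
  have P: "A - 1\<^sub>m n \<in> carrier_mat n n"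
    using A by (simp add: minus_carrier_mat)
  have form: "u \<bullet> (((A - 1\<^sub>m n)\<^sup>T * E + E * (A - 1\<^sub>m n)) *\<^sub>v u) =
    2 * (weighted_scalar_prod (\<lambda>i. E $$ (i, i)) u (A *\<^sub>v u) - weighted_scalar_prod (\<lambda>i. E $$ (i, i)) u u)"
    using quadratic_form_lyapunov_sum[OF E sym P u] A E u
    by (simp add: minus_mult_distrib_mat_vec[of _ n n] mult_minus_distrib_mat_vec
        scalar_prod_minus_distrib[of _ n] scalar_prod_diagonal_mult_vec[OF E dg])
  show strict: "weighted_scalar_prod (\<lambda>i. E $$ (i, i)) u (A *\<^sub>v u) < weighted_scalar_prod (\<lambda>i. E $$ (i, i)) u u"
    if "u \<noteq> 0\<^sub>v n"
    using lyap u that P E form unfolding neg_def_mat_def by auto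
  show "weighted_scalar_prod (\<lambda>i. E $$ (i, i)) u (A *\<^sub>v u) \<le> weighted_scalar_prod (\<lambda>i. E $$ (i, i)) u u"
    using strict A by (cases "u = 0\<^sub>v n") (auto simp: weighted_scalar_prod_def)
qed

lemma nonneg_mat_eigenvector_abs_le:
  fixes N :: "real mat"
  assumes N: "N \<in> carrier_mat m m" and nn: "nonneg_mat N"
    and ev: "eigenvector (map_mat complex_of_real N) z l" and i: "i < m"
  shows "cmod l * cmod (z $ i) \<le> (N *\<^sub>v vec m (\<lambda>j. cmod (z $ j))) $ i"
proof -
  have z: "z \<in> carrier_vec m" and Nz: "map_mat complex_of_real N *\<^sub>v z = l \<cdot>\<^sub>v z"
    using ev N unfolding eigenvector_def by auto
  have "cmod l * cmod (z $ i) = cmod ((map_mat complex_of_real N *\<^sub>v z) $ i)"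
    using Nz z i by (simp add: norm_mult)
  also have "\<dots> = cmod (\<Sum>j\<in>{0..<m}. complex_of_real (N $$ (i, j)) * z $ j)"
    using N z i by (simp add: mult_mat_vec_def scalar_prod_def)
  also have "\<dots> \<le> (\<Sum>j\<in>{0..<m}. N $$ (i, j) * cmod (z $ j))"
    using nn N i by (intro order.trans[OF norm_sum] sum_mono) (auto simp: norm_mult nonneg_mat_def)
  also have "\<dots> = (N *\<^sub>v vec m (\<lambda>j. cmod (z $ j))) $ i"
    using N i by (simp add: mult_mat_vec_def scalar_prod_def)
  finally show ?thesis .
qed

lemma schur_stable_if_weighted_contraction:
  fixes N :: "real mat"
  assumes N: "N \<in> carrier_mat m m" and m: "0 < m" and nn: "nonneg_mat N"
    and f: "\<And>i. i < m \<Longrightarrow> 0 < f i"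
    and contraction: "\<And>x. x \<in> carrier_vec m \<Longrightarrow> x \<noteq> 0\<^sub>v m \<Longrightarrow>
      weighted_scalar_prod f x (N *\<^sub>v x) < weighted_scalar_prod f x x"
  shows "schur_stable N"
proof -
  let ?C = "map_mat complex_of_real N"
  obtain l where "l \<in> spectrum ?C" and radius: "spectral_radius ?C = cmod l"
    using spectral_radius_mem_max(1)[of ?C m] N m by auto
  then obtain z where ev: "eigenvector ?C z l"
    unfolding spectrum_def eigenvalue_def by auto
  then have z: "z \<in> carrier_vec m" "z \<noteq> 0\<^sub>v m"
    using N unfolding eigenvector_def by auto
  define w where "w = vec m (\<lambda>j. cmod (z $ j))"
  have w: "w \<in> carrier_vec m"
    by (simp add: w_def)
  have "w \<noteq> 0\<^sub>v m"
  proof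
    assume "w = 0\<^sub>v m"
    then have "z $ i = 0" if "i < m" for i
      using that by (metis index_vec index_zero_vec(1) norm_eq_zero w_def)
    then have "z = 0\<^sub>v m"
      using z(1) by (intro eq_vecI) auto
    with z(2) show False ..
  qed
  with contraction w have lt: "weighted_scalar_prod f w (N *\<^sub>v w) < weighted_scalar_prod f w w"
    by blast
  have "cmod l * (f i * w $ i * w $ i) \<le> f i * w $ i * (N *\<^sub>v w) $ i" if i: "i < m" for i
  proof -
    have "cmod l * w $ i \<le> (N *\<^sub>v w) $ i"
      using nonneg_mat_eigenvector_abs_le[OF N nn ev i] i by (simp add: w_def)
    moreover have "0 \<le> f i * w $ i"
      using f[OF i] i by (simp add: w_def)
    ultimately show ?thesis
      by (metis mult_left_mono mult.left_commute)
  qed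
  then have le: "cmod l * weighted_scalar_prod f w w \<le> weighted_scalar_prod f w (N *\<^sub>v w)"
    using w unfolding weighted_scalar_prod_def sum_distrib_left by (intro sum_mono) auto
  have nonneg: "0 \<le> weighted_scalar_prod f w w"
    using f unfolding weighted_scalar_prod_def w_def by (intro sum_nonneg) (simp add: less_imp_le)
  have "cmod l < 1"
  proof (rule ccontr)
    assume "\<not> cmod l < 1"
    then have "weighted_scalar_prod f w w \<le> cmod l * weighted_scalar_prod f w w"
      using mult_right_mono[OF _ nonneg, of 1 "cmod l"] by simp
    with le lt show False
      by linarith
  qed
  then show ?thesis
    using N radius unfolding schur_stable_def by simp
qed

lemma nonneg_mat_four_block_mat:
  assumes "A \<in> carrier_mat n1 m1" "B \<in> carrier_mat n1 m2" "C \<in> carrier_mat n2 m1" "D \<in> carrier_mat n2 m2"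
    and "nonneg_mat A" "nonneg_mat B" "nonneg_mat C" "nonneg_mat D"
  shows "nonneg_mat (four_block_mat A B C D)"
  using assms unfolding nonneg_mat_def by auto

lemma nonneg_mat_diagonal_mat:
  assumes "D \<in> carrier_mat n n" "diagonal_mat D" "\<And>i. i < n \<Longrightarrow> 0 \<le> D $$ (i, i)"
  shows "nonneg_mat D"
  using assms unfolding nonneg_mat_def diagonal_mat_def by (metis carrier_matD order_refl)

lemma weighted_scalar_prod_coupled_block:
  fixes A B D :: "real mat"
  assumes A: "A \<in> carrier_mat n n" and B: "B \<in> carrier_mat n n" and D: "D \<in> carrier_mat n n"
    and dg: "diagonal_mat D" and u: "u \<in> carrier_vec n" and v: "v \<in> carrier_vec n"
  shows "weighted_scalar_prod (\<lambda>i. e (i mod n)) (u @\<^sub>v v) (four_block_mat (A - D) D D (B - D) *\<^sub>v (u @\<^sub>v v)) =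
    weighted_scalar_prod e u (A *\<^sub>v u) + weighted_scalar_prod e v (B *\<^sub>v v)
    - (\<Sum>i<n. e i * D $$ (i, i) * (u $ i - v $ i)\<^sup>2)"
proof -
  have AD: "A - D \<in> carrier_mat n n" and BD: "B - D \<in> carrier_mat n n"
    using A B D by auto
  have upper: "((A - D) *\<^sub>v u + D *\<^sub>v v) $ i = (A *\<^sub>v u) $ i - D $$ (i, i) * u $ i + D $$ (i, i) * v $ i"
    and lower: "(D *\<^sub>v u + (B - D) *\<^sub>v v) $ i = (B *\<^sub>v v) $ i + D $$ (i, i) * u $ i - D $$ (i, i) * v $ i"
    if "i < n" for i
    using that A B D u v diagonal_mat_mult_vec_index[OF D dg u that] diagonal_mat_mult_vec_index[OF D dg v that]
    by (simp_all add: minus_mult_distrib_mat_vec[of _ n n])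
  have "weighted_scalar_prod (\<lambda>i. e (i mod n)) (u @\<^sub>v v) (four_block_mat (A - D) D D (B - D) *\<^sub>v (u @\<^sub>v v)) =
    weighted_scalar_prod e u ((A - D) *\<^sub>v u + D *\<^sub>v v) + weighted_scalar_prod e v (D *\<^sub>v u + (B - D) *\<^sub>v v)"
    using AD BD D u v
    by (simp add: four_block_mat_mult_vec[OF AD D D BD u v] weighted_scalar_prod_append_periodic)
  also have "\<dots> = (\<Sum>i<n. e i * u $ i * (A *\<^sub>v u) $ i + e i * v $ i * (B *\<^sub>v v) $ i
      - e i * D $$ (i, i) * (u $ i - v $ i)\<^sup>2)"
    unfolding weighted_scalar_prod_def carrier_vecD[OF u] carrier_vecD[OF v] sum.distrib[symmetric]
    by (intro sum.cong) (auto simp: upper lower power2_eq_square algebra_simps)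
  also have "\<dots> = weighted_scalar_prod e u (A *\<^sub>v u) + weighted_scalar_prod e v (B *\<^sub>v v)
    - (\<Sum>i<n. e i * D $$ (i, i) * (u $ i - v $ i)\<^sup>2)"
    using u v unfolding weighted_scalar_prod_def by (simp add: sum.distrib sum_subtractf)
  finally show ?thesis .
qed

lemma schur_stable_coupled_block:
  fixes A B D E :: "real mat"
  assumes A: "A \<in> carrier_mat n n" and B: "B \<in> carrier_mat n n" and n: "0 < n"
    and E: "E \<in> carrier_mat n n" and dgE: "diagonal_mat E" and pd: "pos_def_mat E"
    and lyapA: "neg_def_mat ((A - 1\<^sub>m n)\<^sup>T * E + E * (A - 1\<^sub>m n))"
    and lyapB: "neg_def_mat ((B - 1\<^sub>m n)\<^sup>T * E + E * (B - 1\<^sub>m n))"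
    and "D \<in> DAB n A B"
  shows "schur_stable (four_block_mat (A - D) D D (B - D))"
proof -
  from \<open>D \<in> DAB n A B\<close> have D: "D \<in> carrier_mat n n" and dgD: "diagonal_mat D"
    and D_nonneg: "\<And>i. i < n \<Longrightarrow> 0 \<le> D $$ (i, i)"
    and "nonneg_mat (A - D)" "nonneg_mat (B - D)"
    unfolding DAB_def by auto
  define e where "e i = E $$ (i, i)" for i
  let ?M = "four_block_mat (A - D) D D (B - D)"
  have M: "?M \<in> carrier_mat (n + n) (n + n)"
    using A B D by auto
  have "nonneg_mat ?M"
    using A B D \<open>nonneg_mat (A - D)\<close> \<open>nonneg_mat (B - D)\<close> nonneg_mat_diagonal_mat[OF D dgD D_nonneg]
    by (intro nonneg_mat_four_block_mat[of _ n n]) auto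
  moreover have "0 < e (i mod n)" for i
    using pos_def_mat_diagonal_entry_pos[OF E pd] n unfolding e_def by simp
  moreover have "weighted_scalar_prod (\<lambda>i. e (i mod n)) x (?M *\<^sub>v x) < weighted_scalar_prod (\<lambda>i. e (i mod n)) x x"
    if x: "x \<in> carrier_vec (n + n)" "x \<noteq> 0\<^sub>v (n + n)" for x
  proof -
    define u v where "u = vec_first x n" and "v = vec_last x n"
    have u: "u \<in> carrier_vec n" and v: "v \<in> carrier_vec n" and x_split: "x = u @\<^sub>v v"
      using x(1) unfolding u_def v_def by auto
    have "u \<noteq> 0\<^sub>v n \<or> v \<noteq> 0\<^sub>v n"
      using x(2) x_split by auto
    then have "weighted_scalar_prod e u (A *\<^sub>v u) + weighted_scalar_prod e v (B *\<^sub>v v) <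
      weighted_scalar_prod e u u + weighted_scalar_prod e v v"
      using weighted_contraction_if_neg_def_lyapunov[OF A E dgE lyapA u]
        weighted_contraction_if_neg_def_lyapunov[OF B E dgE lyapB v]
      unfolding e_def[symmetric] by (auto intro: add_less_le_mono add_le_less_mono)
    moreover have "0 \<le> (\<Sum>i<n. e i * D $$ (i, i) * (u $ i - v $ i)\<^sup>2)"
      using pos_def_mat_diagonal_entry_pos[OF E pd] D_nonneg unfolding e_def
      by (intro sum_nonneg mult_nonneg_nonneg) (auto intro: less_imp_le)
    ultimately show ?thesis
      unfolding x_split weighted_scalar_prod_coupled_block[OF A B D dgD u v]
        weighted_scalar_prod_append_periodic[OF u u v v]
      by linarith
  qed
  ultimately show ?thesis
    using schur_stable_if_weighted_contraction[OF M, where f = "\<lambda>i. e (i mod n)"] n by auto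
qed

theorem theorem2:
  fixes A B :: "real mat" and n :: nat
  assumes A: "A \<in> carrier_mat n n" and B: "B \<in> carrier_mat n n"
    and A_nonneg: "nonneg_mat A" and B_nonneg: "nonneg_mat B"
    and A_stable: "schur_stable A" and B_stable: "schur_stable B"
  shows "((\<exists>E \<in> carrier_mat n n. diagonal_mat E \<and> pos_def_mat E \<and>
              neg_def_mat (A\<^sup>T * E * A - E) \<and> neg_def_mat (B\<^sup>T * E * B - E))
          \<longrightarrow> (\<exists>E \<in> carrier_mat n n. diagonal_mat E \<and> pos_def_mat E \<and>
              neg_def_mat ((A - 1\<^sub>m n)\<^sup>T * E + E * (A - 1\<^sub>m n)) \<and>
              neg_def_mat ((B - 1\<^sub>m n)\<^sup>T * E + E * (B - 1\<^sub>m n))))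
       \<and> ((\<exists>E \<in> carrier_mat n n. diagonal_mat E \<and> pos_def_mat E \<and>
              neg_def_mat ((A - 1\<^sub>m n)\<^sup>T * E + E * (A - 1\<^sub>m n)) \<and>
              neg_def_mat ((B - 1\<^sub>m n)\<^sup>T * E + E * (B - 1\<^sub>m n)))
          \<longrightarrow> (\<forall>D \<in> DAB n A B.
                 schur_stable (four_block_mat (A - D) D D (B - D))))"
proof (intro conjI impI ballI)
  assume "\<exists>E \<in> carrier_mat n n. diagonal_mat E \<and> pos_def_mat E \<and>
    neg_def_mat (A\<^sup>T * E * A - E) \<and> neg_def_mat (B\<^sup>T * E * B - E)"
  then show "\<exists>E \<in> carrier_mat n n. diagonal_mat E \<and> pos_def_mat E \<and>
    neg_def_mat ((A - 1\<^sub>m n)\<^sup>T * E + E * (A - 1\<^sub>m n)) \<and>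
    neg_def_mat ((B - 1\<^sub>m n)\<^sup>T * E + E * (B - 1\<^sub>m n))"
    using neg_def_lyapunov_continuous_if_discrete[OF A] neg_def_lyapunov_continuous_if_discrete[OF B]
    by blast
next
  fix D
  assume continuous: "\<exists>E \<in> carrier_mat n n. diagonal_mat E \<and> pos_def_mat E \<and>
    neg_def_mat ((A - 1\<^sub>m n)\<^sup>T * E + E * (A - 1\<^sub>m n)) \<and>
    neg_def_mat ((B - 1\<^sub>m n)\<^sup>T * E + E * (B - 1\<^sub>m n))"
    and D: "D \<in> DAB n A B"
  show "schur_stable (four_block_mat (A - D) D D (B - D))"
  proof (cases "n = 0")
    case True
    \<comment> \<open>the spectral radius of a 0 x 0 matrix is Max {}, so stability must come from A\<close>
    have "four_block_mat (A - D) D D (B - D) = A"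
      using A B D True unfolding DAB_def by (intro eq_matI) auto
    with A_stable show ?thesis
      by simp
  next
    case False
    with continuous D show ?thesis
      using schur_stable_coupled_block[OF A B] by blast
  qed
qed

end
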